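(* Let $\alpha\in(0,2]$, $c>0$, $a>0$, and for $c'>0$ let $\{G^{\alpha,c',a}(s):s\ge0\}$ denote the centered Gaussian process with covariance $\mathrm{Cov}(G^{\alpha,c',a}(s),G^{\alpha,c',a}(r))=\frac12\big(f^{\alpha,c',a}(s)+f^{\alpha,c',a}(r)-f^{\alpha,c',a}(|s-r|)\big)$. Then for any constant $b>0$, $$\{G^{\alpha,c,a}(bs)\}_{s\ge0}\overset{\mathrm{dist}}{=}\{b^{1/2}\,G^{\alpha,c/b^\alpha,a}(s)\}_{s\ge0}.$$
   Context: For $c'>0$ define $f^{\alpha,c',a}(0)=0$ and for $s>0$, $f^{\alpha,c',a}(s)=\frac{4s}{a\pi}\int_0^\infty\frac{\sin^2(u/2)}{u^2}(1-e^{-2c'(u/s)^\alpha})\,\mathrm{d}u$. *)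

theory Defs
  imports "HOL-Probability.Probability"
begin

definition f_fun :: "real \<Rightarrow> real \<Rightarrow> real \<Rightarrow> real \<Rightarrow> real" where
  "f_fun \<alpha> c' a s =
     (if s = 0 then 0
      else 4 * s / (a * pi) *
        (LBINT u:{0<..}. (sin (u / 2))\<^sup>2 / u\<^sup>2 * (1 - exp (- 2 * c' * (u / s) powr \<alpha>))))"

definition centered_normal_rv :: "'a measure \<Rightarrow> ('a \<Rightarrow> real) \<Rightarrow> real \<Rightarrow> bool" where
  "centered_normal_rv M Z v \<longleftrightarrow>
     Z \<in> borel_measurable M \<and>
     ((v = 0 \<and> (AE \<omega> in M. Z \<omega> = 0)) \<or>
      (v > 0 \<and> distributed M lborel Z (normal_density 0 (sqrt v))))"

definition centered_gaussian_process ::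
  "'a measure \<Rightarrow> 'i set \<Rightarrow> ('i \<Rightarrow> 'a \<Rightarrow> real) \<Rightarrow> ('i \<Rightarrow> 'i \<Rightarrow> real) \<Rightarrow> bool" where
  "centered_gaussian_process M T X K \<longleftrightarrow>
     prob_space M \<and>
     (\<forall>t\<in>T. X t \<in> borel_measurable M) \<and>
     (\<forall>S w. finite S \<longrightarrow> S \<subseteq> T \<longrightarrow>
        centered_normal_rv M (\<lambda>\<omega>. \<Sum>t\<in>S. w t * X t \<omega>)
          (\<Sum>s\<in>S. \<Sum>t\<in>S. w s * w t * K s t))"

definition G_cov :: "real \<Rightarrow> real \<Rightarrow> real \<Rightarrow> real \<Rightarrow> real \<Rightarrow> real" where
  "G_cov \<alpha> c' a s r = (f_fun \<alpha> c' a s + f_fun \<alpha> c' a r - f_fun \<alpha> c' a \<bar>s - r\<bar>) / 2"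

end

theory Submission
  imports Defs
begin

(* Both sides are centred Gaussian processes on [0, oo). The law of such a process on the
  product sigma-algebra is determined by its finite-dimensional marginals, and by the
  Cramer-Wold device these are determined by the laws of the linear combinations, i.e. by the
  covariance. The substitution u/(b s) gives f^{alpha,c,a}(b s) = b f^{alpha,c/b^alpha,a}(s), so
  s |-> G^{alpha,c,a}(b s) and b^(1/2) G^{alpha,c/b^alpha,a} have the same covariance.

  The multivariate uniqueness theorem for characteristic functions is proved by induction on
  the number of coordinates: restricting a measure to {x. x j : E} and forgetting coordinate j
  preserves equality of characteristic functions, because the weights 1 + cos (h + phi) express
  the relevant integrals through one-dimensional characteristic functions of weighted measures,
  to which Levy's uniqueness theorem applies. *)

lemma finite_measure_density_bounded:
  assumes "finite_measure M" "w \<in> borel_measurable M" "\<And>x. w x \<le> B"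
  shows "finite_measure (density M (\<lambda>x. ennreal (w x)))"
proof (rule finite_measureI)
  interpret finite_measure M by fact
  have "emeasure (density M (\<lambda>x. ennreal (w x))) (space M) = (\<integral>\<^sup>+x. ennreal (w x) \<partial>M)"
    using assms(2) by (auto simp: emeasure_density intro!: nn_integral_cong)
  also have "\<dots> \<le> (\<integral>\<^sup>+x. ennreal B \<partial>M)"
    using assms(3) by (intro nn_integral_mono) (simp add: ennreal_leI)
  also have "\<dots> < \<infinity>"
    by (simp add: ennreal_mult_eq_top_iff less_top[symmetric])
  finally show "emeasure (density M (\<lambda>x. ennreal (w x))) (space (density M (\<lambda>x. ennreal (w x)))) \<noteq> \<infinity>"
    by simp
qed

lemma finite_measure_eq_if_char_eq:
  fixes \<mu> \<nu> :: "real measure"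
  assumes "finite_measure \<mu>" "finite_measure \<nu>" "sets \<mu> = sets borel" "sets \<nu> = sets borel"
    and char: "\<And>\<tau>. (\<integral>y. iexp (\<tau> * y) \<partial>\<mu>) = (\<integral>y. iexp (\<tau> * y) \<partial>\<nu>)"
  shows "\<mu> = \<nu>"
proof -
  have space: "space \<mu> = UNIV" "space \<nu> = UNIV"
    using assms(3,4)[THEN sets_eq_imp_space_eq] by simp_all
  define m where "m = measure \<mu> UNIV"
  have m_eq: "measure \<nu> UNIV = m"
    using char[of 0] space by (simp add: m_def)
  show ?thesis
  proof (cases "m = 0")
    case True
    have "emeasure M A = 0" if "finite_measure M" "space M = UNIV" "measure M UNIV = 0" for M :: "real measure" and A
    proof -
      have "emeasure M A \<le> emeasure M (space M)"
        by (rule emeasure_space)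
      also have "\<dots> = 0"
        using that by (simp add: finite_measure.emeasure_eq_measure)
      finally show ?thesis
        by simp
    qed
    then show ?thesis
      using assms(1-4) space m_eq True by (intro measure_eqI) (simp_all add: m_def)
  next
    case False
    then have "m > 0"
      by (simp add: m_def order_less_le)
    then have inverse_m: "ennreal (1 / m) * ennreal m = 1"
      by (simp flip: ennreal_mult)
    define normalize :: "real measure \<Rightarrow> real measure"
      where "normalize M = density M (\<lambda>_. ennreal (1 / m))" for M
    have normalize_distribution: "real_distribution (normalize M)"
      if "finite_measure M" "sets M = sets borel" "measure M UNIV = m" for M
    proof -
      interpret finite_measure M by fact
      have "space M = UNIV" "UNIV \<in> sets M"
        using sets_eq_imp_space_eq[OF that(2)] that(2) by simp_all
      then have "emeasure (normalize M) (space (normalize M)) = 1"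
        using that(3) inverse_m
        by (simp add: normalize_def emeasure_density_const emeasure_eq_measure mult.commute)
      then show ?thesis
        using that(2) by (auto simp: real_distribution_def real_distribution_axioms_def normalize_def intro: prob_spaceI)
    qed
    have char_normalize: "char (normalize M) \<tau> = (1 / m) *\<^sub>R (\<integral>y. iexp (\<tau> * y) \<partial>M)"
      if "sets M = sets borel" for M \<tau>
      using \<open>m > 0\<close> unfolding char_def normalize_def
      by (subst integral_density) (auto simp: measurable_cong_sets[OF that refl])
    have "char (normalize \<mu>) = char (normalize \<nu>)"
      unfolding char_normalize[OF assms(3)] char_normalize[OF assms(4)] char ..
    then have normalize_eq: "normalize \<mu> = normalize \<nu>"
      using assms(1-4) m_eq by (intro Levy_uniqueness normalize_distribution) (simp_all add: m_def)
    have renormalize: "density (normalize M) (\<lambda>_. ennreal m) = M" for M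
      using inverse_m by (simp add: normalize_def density_density_eq density_1)
    have "\<mu> = density (normalize \<mu>) (\<lambda>_. ennreal m)"
      by (rule renormalize[symmetric])
    also have "\<dots> = \<nu>"
      unfolding normalize_eq by (rule renormalize)
    finally show ?thesis .
  qed
qed

lemma integral_distr_density:
  fixes g :: "real \<Rightarrow> 'b::{banach, second_countable_topology}"
  assumes "f \<in> borel_measurable M" "w \<in> borel_measurable M" "\<And>x. 0 \<le> w x"
    and "g \<in> borel_measurable borel"
  shows "integral\<^sup>L (distr (density M (\<lambda>x. ennreal (w x))) borel f) g = (\<integral>x. w x *\<^sub>R g (f x) \<partial>M)"
  using assms by (simp add: integral_distr integral_density)

(* The coefficients 0, 1, -1 of h are written out so that the right-hand side matches the
  joint characteristic function of (g, h). *)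
lemma integral_one_plus_cos_times_iexp:
  assumes "finite_measure M" "g \<in> borel_measurable M" "h \<in> borel_measurable M"
  shows "(\<integral>x. (1 + cos (h x + \<phi>)) *\<^sub>R iexp (\<tau> * g x) \<partial>M) =
    (\<integral>x. iexp (\<tau> * g x + 0 * h x) \<partial>M) +
    (iexp \<phi> * (\<integral>x. iexp (\<tau> * g x + 1 * h x) \<partial>M) + iexp (- \<phi>) * (\<integral>x. iexp (\<tau> * g x + - 1 * h x) \<partial>M)) / 2"
proof -
  have integrable: "integrable M (\<lambda>x. iexp (k x))" if "k \<in> borel_measurable M" for k
    using that by (intro finite_measure.integrable_const_bound[OF assms(1), where B=1]) simp_all
  have "(1 + cos (h x + \<phi>)) *\<^sub>R iexp (\<tau> * g x) =
      iexp (\<tau> * g x) + (iexp \<phi> * iexp (\<tau> * g x + h x) + iexp (- \<phi>) * iexp (\<tau> * g x - h x)) / 2" for x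
    by (simp add: scaleR_conv_of_real cos_of_real[symmetric] cos_exp_eq exp_add[symmetric] field_simps)
  moreover have "integrable M (\<lambda>x. iexp (\<tau> * g x))" "integrable M (\<lambda>x. iexp (\<tau> * g x + h x))"
    "integrable M (\<lambda>x. iexp (\<tau> * g x - h x))"
    using assms(2,3) by (simp_all add: integrable del: of_real_add of_real_diff of_real_mult)
  ultimately show ?thesis
    by (simp del: of_real_add of_real_diff of_real_mult)
qed

lemma distr_density_eq_if_weighted_char_eq:
  fixes f w :: "'a \<Rightarrow> real"
  assumes "finite_measure \<mu>" "finite_measure \<nu>" "sets \<mu> = sets \<nu>"
    and "f \<in> borel_measurable \<mu>" "w \<in> borel_measurable \<mu>" "\<And>x. 0 \<le> w x" "\<And>x. w x \<le> B"
    and char: "\<And>\<tau>. (\<integral>x. w x *\<^sub>R iexp (\<tau> * f x) \<partial>\<mu>) = (\<integral>x. w x *\<^sub>R iexp (\<tau> * f x) \<partial>\<nu>)"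
  shows "distr (density \<mu> (\<lambda>x. ennreal (w x))) borel f = distr (density \<nu> (\<lambda>x. ennreal (w x))) borel f"
proof (rule finite_measure_eq_if_char_eq)
  have meas_\<nu>: "f \<in> borel_measurable \<nu>" "w \<in> borel_measurable \<nu>"
    using assms(3-5) measurable_cong_sets[OF assms(3) refl] by blast+
  show "finite_measure (distr (density \<mu> (\<lambda>x. ennreal (w x))) borel f)"
    "finite_measure (distr (density \<nu> (\<lambda>x. ennreal (w x))) borel f)"
    using assms meas_\<nu>
    by (auto intro!: finite_measure.finite_measure_distr finite_measure_density_bounded)
  fix \<tau>
  show "(\<integral>y. iexp (\<tau> * y) \<partial>distr (density \<mu> (\<lambda>x. ennreal (w x))) borel f) =
      (\<integral>y. iexp (\<tau> * y) \<partial>distr (density \<nu> (\<lambda>x. ennreal (w x))) borel f)"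
    using assms meas_\<nu> by (simp add: integral_distr_density)
qed simp_all

lemma integral_indicator_cos_eq_if_joint_char_eq:
  fixes g h :: "'a \<Rightarrow> real"
  assumes "finite_measure \<mu>" "finite_measure \<nu>" "sets \<mu> = sets \<nu>"
    and "g \<in> borel_measurable \<mu>" "h \<in> borel_measurable \<mu>" "E \<in> sets borel"
    and char: "\<And>\<tau> \<theta>. (\<integral>x. iexp (\<tau> * g x + \<theta> * h x) \<partial>\<mu>) = (\<integral>x. iexp (\<tau> * g x + \<theta> * h x) \<partial>\<nu>)"
  shows "(\<integral>x. indicator E (g x) * cos (h x + \<phi>) \<partial>\<mu>) = (\<integral>x. indicator E (g x) * cos (h x + \<phi>) \<partial>\<nu>)"
proof -
  have meas_\<nu>: "g \<in> borel_measurable \<nu>" "h \<in> borel_measurable \<nu>"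
    using assms(4,5) measurable_cong_sets[OF assms(3) refl] by blast+
  have weighted: "(\<integral>x. w x * indicator E (g x) \<partial>\<mu>) = (\<integral>x. w x * indicator E (g x) \<partial>\<nu>)"
    if "w \<in> borel_measurable \<mu>" "\<And>x. 0 \<le> w x" "\<And>x. w x \<le> 2"
      and "\<And>\<tau>. (\<integral>x. w x *\<^sub>R iexp (\<tau> * g x) \<partial>\<mu>) = (\<integral>x. w x *\<^sub>R iexp (\<tau> * g x) \<partial>\<nu>)" for w
  proof -
    have as_distr: "(\<integral>x. w x * indicator E (g x) \<partial>M) =
        (integral\<^sup>L (distr (density M (\<lambda>x. ennreal (w x))) borel g) (indicator E) :: real)"
      if "g \<in> borel_measurable M" "w \<in> borel_measurable M" for M
      using that assms(6) \<open>\<And>x. 0 \<le> w x\<close> by (subst integral_distr_density) auto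
    have "distr (density \<mu> (\<lambda>x. ennreal (w x))) borel g = distr (density \<nu> (\<lambda>x. ennreal (w x))) borel g"
      using assms(1-4) that by (rule distr_density_eq_if_weighted_char_eq)
    moreover have "w \<in> borel_measurable \<nu>"
      using that(1) measurable_cong_sets[OF assms(3) refl] by blast
    ultimately show ?thesis
      using as_distr[of \<mu>] as_distr[of \<nu>] assms(4) meas_\<nu> that(1) by simp
  qed
  have cos_bounds: "0 \<le> 1 + cos y" "1 + cos y \<le> 2" for y :: real
    using cos_ge_minus_one[of y] cos_le_one[of y] by linarith+
  have "(\<integral>x. (1 + cos (h x + \<phi>)) * indicator E (g x) \<partial>\<mu>) = (\<integral>x. (1 + cos (h x + \<phi>)) * indicator E (g x) \<partial>\<nu>)"
  proof (rule weighted)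
    fix \<tau>
    show "(\<integral>x. (1 + cos (h x + \<phi>)) *\<^sub>R iexp (\<tau> * g x) \<partial>\<mu>) = (\<integral>x. (1 + cos (h x + \<phi>)) *\<^sub>R iexp (\<tau> * g x) \<partial>\<nu>)"
      unfolding integral_one_plus_cos_times_iexp[OF assms(1,4,5)]
        integral_one_plus_cos_times_iexp[OF assms(2) meas_\<nu>] char ..
  qed (use assms(5) cos_bounds in auto)
  moreover have "(\<integral>x. indicator E (g x) \<partial>\<mu>) = (\<integral>x. (indicator E (g x) :: real) \<partial>\<nu>)"
    using weighted[where w="\<lambda>_. 1"] char[of _ 0] by simp
  moreover have "(\<integral>x. (1 + cos (h x + \<phi>)) * indicator E (g x) \<partial>M) =
      (\<integral>x. (indicator E (g x) :: real) \<partial>M) + (\<integral>x. indicator E (g x) * cos (h x + \<phi>) \<partial>M)"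
    if "finite_measure M" "g \<in> borel_measurable M" "h \<in> borel_measurable M" for M
    using that assms(6)
    by (subst Bochner_Integration.integral_add[symmetric])
      (auto intro!: finite_measure.integrable_const_bound[where B=1] Bochner_Integration.integral_cong
        simp: algebra_simps abs_mult mult_le_one)
  ultimately show ?thesis
    using assms(1,2,4,5) meas_\<nu> by simp
qed

lemma integral_indicator_iexp_eq_if_joint_char_eq:
  fixes g h :: "'a \<Rightarrow> real"
  assumes "finite_measure \<mu>" "finite_measure \<nu>" "sets \<mu> = sets \<nu>"
    and "g \<in> borel_measurable \<mu>" "h \<in> borel_measurable \<mu>" "E \<in> sets borel"
    and "\<And>\<tau> \<theta>. (\<integral>x. iexp (\<tau> * g x + \<theta> * h x) \<partial>\<mu>) = (\<integral>x. iexp (\<tau> * g x + \<theta> * h x) \<partial>\<nu>)"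
  shows "(\<integral>x. indicator E (g x) *\<^sub>R iexp (h x) \<partial>\<mu>) = (\<integral>x. indicator E (g x) *\<^sub>R iexp (h x) \<partial>\<nu>)"
proof -
  have meas_\<nu>: "g \<in> borel_measurable \<nu>" "h \<in> borel_measurable \<nu>"
    using assms(4,5) measurable_cong_sets[OF assms(3) refl] by blast+
  \<comment> \<open>real and imaginary parts, as the cases \<open>\<phi> = 0\<close> and \<open>\<phi> = - pi / 2\<close> of the previous lemma\<close>
  have decompose: "(\<integral>x. indicator E (g x) *\<^sub>R iexp (h x) \<partial>M) =
      complex_of_real (\<integral>x. indicator E (g x) * cos (h x + 0) \<partial>M) +
      \<i> * complex_of_real (\<integral>x. indicator E (g x) * cos (h x + - (pi / 2)) \<partial>M)"
    if "finite_measure M" "g \<in> borel_measurable M" "h \<in> borel_measurable M" for M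
  proof -
    have "indicator E (g x) *\<^sub>R iexp (h x) =
        complex_of_real (indicator E (g x) * cos (h x)) + \<i> * complex_of_real (indicator E (g x) * sin (h x))" for x
      by (rule complex_eqI) (simp_all add: Re_exp Im_exp)
    moreover have "integrable M (\<lambda>x. indicator E (g x) * cos (h x))" "integrable M (\<lambda>x. indicator E (g x) * sin (h x))"
      using that assms(6)
      by (auto intro!: finite_measure.integrable_const_bound[where B=1] simp: abs_mult mult_le_one)
    ultimately show ?thesis
      by (simp add: cos_diff del: of_real_mult)
  qed
  show ?thesis
    unfolding decompose[OF assms(1,4,5)] decompose[OF assms(2) meas_\<nu>]
      integral_indicator_cos_eq_if_joint_char_eq[OF assms] ..
qed

lemma measure_eqI_PiM_boxes:
  fixes \<mu> \<nu> :: "('i \<Rightarrow> real) measure"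
  assumes "finite J" "finite_measure \<mu>"
    and "sets \<mu> = sets (PiM J (\<lambda>_. borel))" "sets \<nu> = sets (PiM J (\<lambda>_. borel))"
    and "\<And>A. (\<And>i. i \<in> J \<Longrightarrow> A i \<in> sets borel) \<Longrightarrow> emeasure \<mu> (PiE J A) = emeasure \<nu> (PiE J A)"
  shows "\<mu> = \<nu>"
proof (rule measure_eqI_PiM_finite[OF assms(1,3,4), where A="\<lambda>_. PiE J (\<lambda>_. UNIV)"])
  show "range (\<lambda>_. PiE J (\<lambda>_. UNIV)) \<subseteq> prod_algebra J (\<lambda>_. borel)"
    using prod_algebraI_finite[OF assms(1), of "\<lambda>_. UNIV" "\<lambda>_. borel"] by auto
  show "emeasure \<mu> (PiE J (\<lambda>_. UNIV)) \<noteq> \<infinity>"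
    using finite_measure.emeasure_finite[OF assms(2)] by simp
qed (simp_all add: assms(5) space_PiM)

definition section_marginal :: "('i \<Rightarrow> real) measure \<Rightarrow> 'i \<Rightarrow> real set \<Rightarrow> 'i set \<Rightarrow> ('i \<Rightarrow> real) measure"
  where "section_marginal \<mu> j E J =
    distr (density \<mu> (\<lambda>x. ennreal (indicator E (x j)))) (PiM J (\<lambda>_. borel)) (\<lambda>x. restrict x J)"

lemma sets_section_marginal [simp]: "sets (section_marginal \<mu> j E J) = sets (PiM J (\<lambda>_. borel))"
  by (simp add: section_marginal_def)

lemma
  fixes \<mu> :: "('i \<Rightarrow> real) measure" and f :: "('i \<Rightarrow> real) \<Rightarrow> 'b::{banach, second_countable_topology}"
  assumes sets: "sets \<mu> = sets (PiM (insert j J) (\<lambda>_. borel))" and E: "E \<in> sets borel"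
  shows finite_measure_section_marginal:
      "finite_measure \<mu> \<Longrightarrow> finite_measure (section_marginal \<mu> j E J)"
    and integral_section_marginal:
      "f \<in> borel_measurable (PiM J (\<lambda>_. borel)) \<Longrightarrow>
        integral\<^sup>L (section_marginal \<mu> j E J) f = (\<integral>x. indicator E (x j) *\<^sub>R f (restrict x J) \<partial>\<mu>)"
proof -
  have [measurable_cong]: "sets \<mu> = sets (PiM (insert j J) (\<lambda>_. borel))"
    by (rule sets)
  have [measurable]: "(\<lambda>x. restrict x J) \<in> measurable \<mu> (PiM J (\<lambda>_. borel))"
    using measurable_restrict_subset[of J "insert j J" "\<lambda>_. borel"] by auto
  have [measurable]: "(\<lambda>x. indicator E (x j) :: real) \<in> borel_measurable \<mu>"
    using E by measurable
  show "finite_measure \<mu> \<Longrightarrow> finite_measure (section_marginal \<mu> j E J)"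
    unfolding section_marginal_def
    by (rule finite_measure.finite_measure_distr[OF finite_measure_density_bounded[where B=1]]) auto
  show "f \<in> borel_measurable (PiM J (\<lambda>_. borel)) \<Longrightarrow>
      integral\<^sup>L (section_marginal \<mu> j E J) f = (\<integral>x. indicator E (x j) *\<^sub>R f (restrict x J) \<partial>\<mu>)"
    unfolding section_marginal_def by (simp add: integral_distr integral_density)
qed

lemma emeasure_section_marginal_PiE:
  fixes \<mu> :: "('i \<Rightarrow> real) measure"
  assumes sets: "sets \<mu> = sets (PiM (insert j J) (\<lambda>_. borel))" and "j \<notin> J" "finite J"
    and A: "\<And>i. i \<in> insert j J \<Longrightarrow> A i \<in> sets borel"
  shows "emeasure (section_marginal \<mu> j (A j) J) (PiE J A) = emeasure \<mu> (PiE (insert j J) A)"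
proof -
  have [measurable_cong]: "sets \<mu> = sets (PiM (insert j J) (\<lambda>_. borel))"
    by (rule sets)
  have space: "space \<mu> = PiE (insert j J) (\<lambda>_. UNIV)"
    using sets_eq_imp_space_eq[OF sets] by (simp add: space_PiM)
  have restrict_meas: "(\<lambda>x. restrict x J) \<in> measurable \<mu> (PiM J (\<lambda>_. borel))"
    using measurable_restrict_subset[of J "insert j J" "\<lambda>_. borel"] by auto
  have boxes: "PiE J A \<in> sets (PiM J (\<lambda>_. borel))" "PiE (insert j J) A \<in> sets \<mu>"
    unfolding sets using A assms(3) by (auto intro!: sets_PiM_I_finite)
  have "emeasure (section_marginal \<mu> j (A j) J) (PiE J A) =
      (\<integral>\<^sup>+x. ennreal (indicator (A j) (x j)) * indicator ((\<lambda>x. restrict x J) -` PiE J A \<inter> space \<mu>) x \<partial>\<mu>)"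
    unfolding section_marginal_def using restrict_meas boxes(1) A[of j]
    by (simp add: emeasure_distr emeasure_density measurable_sets)
  also have "\<dots> = (\<integral>\<^sup>+x. indicator (PiE (insert j J) A) x \<partial>\<mu>)"
    using assms(2) by (intro nn_integral_cong) (auto simp: space PiE_iff indicator_def)
  also have "\<dots> = emeasure \<mu> (PiE (insert j J) A)"
    using boxes(2) by simp
  finally show ?thesis .
qed

lemma sum_insert_update_linear:
  fixes t x :: "'i \<Rightarrow> real"
  assumes "finite J" "j \<notin> J"
  shows "(\<Sum>i\<in>insert j J. ((\<lambda>i. \<theta> * t i)(j := \<tau>)) i * x i) = \<tau> * x j + \<theta> * (\<Sum>i\<in>J. t i * x i)"
proof -
  have "(\<Sum>i\<in>J. ((\<lambda>i. \<theta> * t i)(j := \<tau>)) i * x i) = (\<Sum>i\<in>J. \<theta> * (t i * x i))"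
    using assms(2) by (intro sum.cong) (auto simp: mult.assoc)
  then show ?thesis
    using assms by (simp add: sum_distrib_left)
qed

theorem PiM_measure_eq_if_char_eq:
  fixes \<mu> \<nu> :: "('i \<Rightarrow> real) measure"
  assumes "finite J" "finite_measure \<mu>" "finite_measure \<nu>"
    and "sets \<mu> = sets (PiM J (\<lambda>_. borel))" "sets \<nu> = sets (PiM J (\<lambda>_. borel))"
    and "\<And>t. (\<integral>x. iexp (\<Sum>i\<in>J. t i * x i) \<partial>\<mu>) = (\<integral>x. iexp (\<Sum>i\<in>J. t i * x i) \<partial>\<nu>)"
  shows "\<mu> = \<nu>"
  using assms
proof (induction J arbitrary: \<mu> \<nu> rule: finite_induct)
  case empty
  have "space \<mu> = {\<lambda>_. undefined}" "space \<nu> = {\<lambda>_. undefined}"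
    using empty.prems(3,4)[THEN sets_eq_imp_space_eq] by (simp_all add: space_PiM)
  moreover have "measure \<mu> (space \<mu>) = measure \<nu> (space \<nu>)"
    using empty.prems(5)[of "\<lambda>_. 0"] by simp
  ultimately have "emeasure \<mu> (PiE {} A) = emeasure \<nu> (PiE {} A)" for A
    using empty.prems(1,2) by (simp add: finite_measure.emeasure_eq_measure)
  then show ?case
    using empty.prems(1-4) by (intro measure_eqI_PiM_boxes) auto
next
  case (insert j J)
  show ?case
  proof (rule measure_eqI_PiM_boxes)
    fix A :: "'i \<Rightarrow> real set" assume A: "\<And>i. i \<in> insert j J \<Longrightarrow> A i \<in> sets borel"
    have "section_marginal \<mu> j (A j) J = section_marginal \<nu> j (A j) J"
    proof (rule insert.IH)
      show "finite_measure (section_marginal \<mu> j (A j) J)" "finite_measure (section_marginal \<nu> j (A j) J)"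
        using insert.prems A by (simp_all add: finite_measure_section_marginal)
      fix t :: "'i \<Rightarrow> real"
      have [measurable_cong]: "sets \<mu> = sets (PiM (insert j J) (\<lambda>_. borel))"
        by (rule insert.prems(3))
      have "(\<integral>x. indicator (A j) (x j) *\<^sub>R iexp (\<Sum>i\<in>J. t i * x i) \<partial>\<mu>) =
          (\<integral>x. indicator (A j) (x j) *\<^sub>R iexp (\<Sum>i\<in>J. t i * x i) \<partial>\<nu>)"
      proof (rule integral_indicator_iexp_eq_if_joint_char_eq)
        fix \<tau> \<theta>
        show "(\<integral>x. iexp (\<tau> * x j + \<theta> * (\<Sum>i\<in>J. t i * x i)) \<partial>\<mu>) =
            (\<integral>x. iexp (\<tau> * x j + \<theta> * (\<Sum>i\<in>J. t i * x i)) \<partial>\<nu>)"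
          using insert.prems(5)[of "(\<lambda>i. \<theta> * t i)(j := \<tau>)"]
          unfolding sum_insert_update_linear[OF insert.hyps] .
      qed (use insert.prems A in simp_all)
      then show "(\<integral>x. iexp (\<Sum>i\<in>J. t i * x i) \<partial>section_marginal \<mu> j (A j) J) =
          (\<integral>x. iexp (\<Sum>i\<in>J. t i * x i) \<partial>section_marginal \<nu> j (A j) J)"
        using insert.prems(3,4) A by (simp add: integral_section_marginal)
    qed simp_all
    then show "emeasure \<mu> (PiE (insert j J) A) = emeasure \<nu> (PiE (insert j J) A)"
      using emeasure_section_marginal_PiE[where A=A, OF insert.prems(3) insert.hyps(2,1) A]
        emeasure_section_marginal_PiE[where A=A, OF insert.prems(4) insert.hyps(2,1) A] by simp
  qed (use insert.prems insert.hyps in simp_all)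
qed

lemma integral_iexp_linear_combination_distr_PiM:
  assumes "\<And>i. i \<in> J \<Longrightarrow> X i \<in> borel_measurable M"
  shows "(\<integral>x. iexp (\<Sum>i\<in>J. t i * x i) \<partial>distr M (PiM J (\<lambda>_. borel)) (\<lambda>\<omega>. \<lambda>i\<in>J. X i \<omega>)) =
    (\<integral>y. iexp y \<partial>distr M borel (\<lambda>\<omega>. \<Sum>i\<in>J. t i * X i \<omega>))"
proof -
  have [measurable]: "(\<lambda>\<omega>. \<lambda>i\<in>J. X i \<omega>) \<in> measurable M (PiM J (\<lambda>_. borel))"
    using assms by (rule measurable_restrict)
  have [measurable]: "(\<lambda>\<omega>. \<Sum>i\<in>J. t i * X i \<omega>) \<in> borel_measurable M"
    using assms by (intro borel_measurable_sum borel_measurable_times) auto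
  have "(\<integral>x. iexp (\<Sum>i\<in>J. t i * x i) \<partial>distr M (PiM J (\<lambda>_. borel)) (\<lambda>\<omega>. \<lambda>i\<in>J. X i \<omega>)) =
      (\<integral>\<omega>. iexp (\<Sum>i\<in>J. t i * (\<lambda>i\<in>J. X i \<omega>) i) \<partial>M)"
    by (rule integral_distr) measurable
  also have "\<dots> = (\<integral>\<omega>. iexp (\<Sum>i\<in>J. t i * X i \<omega>) \<partial>M)"
    by (intro Bochner_Integration.integral_cong refl arg_cong[where f=iexp] sum.cong) auto
  also have "\<dots> = (\<integral>y. iexp y \<partial>distr M borel (\<lambda>\<omega>. \<Sum>i\<in>J. t i * X i \<omega>))"
    by (rule integral_distr[symmetric]) measurable
  finally show ?thesis .
qed

theorem distr_PiM_eq_if_linear_combinations_eq: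
  fixes X :: "'i \<Rightarrow> 'a \<Rightarrow> real" and Y :: "'i \<Rightarrow> 'b \<Rightarrow> real"
  assumes "prob_space M" "prob_space N" "finite J"
    and "\<And>i. i \<in> J \<Longrightarrow> X i \<in> borel_measurable M" "\<And>i. i \<in> J \<Longrightarrow> Y i \<in> borel_measurable N"
    and "\<And>t. distr M borel (\<lambda>\<omega>. \<Sum>i\<in>J. t i * X i \<omega>) = distr N borel (\<lambda>\<omega>. \<Sum>i\<in>J. t i * Y i \<omega>)"
  shows "distr M (PiM J (\<lambda>_. borel)) (\<lambda>\<omega>. \<lambda>i\<in>J. X i \<omega>) = distr N (PiM J (\<lambda>_. borel)) (\<lambda>\<omega>. \<lambda>i\<in>J. Y i \<omega>)"
proof (rule PiM_measure_eq_if_char_eq)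
  show "finite_measure (distr M (PiM J (\<lambda>_. borel)) (\<lambda>\<omega>. \<lambda>i\<in>J. X i \<omega>))"
    "finite_measure (distr N (PiM J (\<lambda>_. borel)) (\<lambda>\<omega>. \<lambda>i\<in>J. Y i \<omega>))"
    using assms(1,2,4,5)
    by (auto intro!: prob_space.finite_measure prob_space.prob_space_distr measurable_restrict)
  fix t :: "'i \<Rightarrow> real"
  show "(\<integral>x. iexp (\<Sum>i\<in>J. t i * x i) \<partial>distr M (PiM J (\<lambda>_. borel)) (\<lambda>\<omega>. \<lambda>i\<in>J. X i \<omega>)) =
      (\<integral>x. iexp (\<Sum>i\<in>J. t i * x i) \<partial>distr N (PiM J (\<lambda>_. borel)) (\<lambda>\<omega>. \<lambda>i\<in>J. Y i \<omega>))"
    using integral_iexp_linear_combination_distr_PiM[of J X M t] integral_iexp_linear_combination_distr_PiM[of J Y N t]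
      assms(4-6) by simp
qed (simp_all add: assms(3))

theorem distr_PiM_eq_if_finite_dim_distr_eq:
  fixes X :: "'i \<Rightarrow> 'a \<Rightarrow> real" and Y :: "'i \<Rightarrow> 'b \<Rightarrow> real"
  assumes "prob_space M"
    and "\<And>i. i \<in> I \<Longrightarrow> X i \<in> borel_measurable M" "\<And>i. i \<in> I \<Longrightarrow> Y i \<in> borel_measurable N"
    and fdd: "\<And>J. finite J \<Longrightarrow> J \<subseteq> I \<Longrightarrow>
      distr M (PiM J (\<lambda>_. borel)) (\<lambda>\<omega>. \<lambda>i\<in>J. X i \<omega>) = distr N (PiM J (\<lambda>_. borel)) (\<lambda>\<omega>. \<lambda>i\<in>J. Y i \<omega>)"
  shows "distr M (PiM I (\<lambda>_. borel)) (\<lambda>\<omega>. \<lambda>i\<in>I. X i \<omega>) = distr N (PiM I (\<lambda>_. borel)) (\<lambda>\<omega>. \<lambda>i\<in>I. Y i \<omega>)"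
proof (rule measure_eqI_PiM_infinite)
  show "finite_measure (distr M (PiM I (\<lambda>_. borel)) (\<lambda>\<omega>. \<lambda>i\<in>I. X i \<omega>))"
    using assms(1,2) by (auto intro!: prob_space.finite_measure prob_space.prob_space_distr measurable_restrict)
  fix J :: "'i set" and A :: "'i \<Rightarrow> real set"
  assume J: "finite J" "J \<subseteq> I" and A: "\<And>i. i \<in> J \<Longrightarrow> A i \<in> sets borel"
  have cylinder_distr: "emeasure (distr P (PiM I (\<lambda>_. borel)) (\<lambda>\<omega>. \<lambda>i\<in>I. Z i \<omega>)) (prod_emb I (\<lambda>_. borel) J (PiE J A)) =
      emeasure (distr P (PiM J (\<lambda>_. borel)) (\<lambda>\<omega>. \<lambda>i\<in>J. Z i \<omega>)) (PiE J A)"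
    if "\<And>i. i \<in> I \<Longrightarrow> Z i \<in> borel_measurable P" for P and Z :: "'i \<Rightarrow> 'c \<Rightarrow> real"
  proof -
    have "(\<lambda>\<omega>. \<lambda>i\<in>I. Z i \<omega>) -` prod_emb I (\<lambda>_. borel) J (PiE J A) = (\<lambda>\<omega>. \<lambda>i\<in>J. Z i \<omega>) -` PiE J A"
      using J(2) by (auto simp: prod_emb_iff PiE_iff extensional_def split: if_splits) blast
    moreover have "prod_emb I (\<lambda>_. borel) J (PiE J A) \<in> sets (PiM I (\<lambda>_. borel))"
      "PiE J A \<in> sets (PiM J (\<lambda>_. borel))"
      using J A by (auto intro!: sets_PiM_I sets_PiM_I_finite)
    ultimately show ?thesis
      using that J(2) by (simp add: emeasure_distr measurable_restrict subset_eq)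
  qed
  show "emeasure (distr M (PiM I (\<lambda>_. borel)) (\<lambda>\<omega>. \<lambda>i\<in>I. X i \<omega>)) (prod_emb I (\<lambda>_. borel) J (PiE J A)) =
      emeasure (distr N (PiM I (\<lambda>_. borel)) (\<lambda>\<omega>. \<lambda>i\<in>I. Y i \<omega>)) (prod_emb I (\<lambda>_. borel) J (PiE J A))"
    using assms(2,3) by (simp add: cylinder_distr fdd[OF J])
qed simp_all

lemma centered_normal_rv_distr_eq:
  assumes "prob_space M" "prob_space N" "centered_normal_rv M Z v" "centered_normal_rv N Z' v"
  shows "distr M borel Z = distr N borel Z'"
proof (cases "v = 0")
  case True
  have "distr P borel W = return borel 0" if "prob_space P" "centered_normal_rv P W 0" for P and W :: "'c \<Rightarrow> real"
  proof -
    have "distr P borel W = distr P borel (\<lambda>_. 0)"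
      using that(2) by (intro distr_cong_AE) (auto simp: centered_normal_rv_def)
    then show ?thesis
      using that(1) by (simp add: prob_space.distr_const)
  qed
  then show ?thesis
    using assms True by metis
next
  case False
  then have "distributed M lborel Z (normal_density 0 (sqrt v))" "distributed N lborel Z' (normal_density 0 (sqrt v))"
    using assms(3,4) by (auto simp: centered_normal_rv_def)
  then show ?thesis
    by (simp add: distributed_def distr_cong[OF refl sets_lborel[symmetric]])
qed

lemma
  assumes "centered_gaussian_process M T X K"
  shows centered_gaussian_process_prob_space: "prob_space M"
    and centered_gaussian_process_measurable: "t \<in> T \<Longrightarrow> X t \<in> borel_measurable M"
    and centered_gaussian_process_linear_combination: "finite S \<Longrightarrow> S \<subseteq> T \<Longrightarrow>
      centered_normal_rv M (\<lambda>\<omega>. \<Sum>t\<in>S. w t * X t \<omega>) (\<Sum>s\<in>S. \<Sum>t\<in>S. w s * w t * K s t)"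
  using assms unfolding centered_gaussian_process_def by blast+

lemma centered_gaussian_process_distr_eq:
  fixes X :: "'i \<Rightarrow> 'a \<Rightarrow> real" and Y :: "'i \<Rightarrow> 'b \<Rightarrow> real"
  assumes X: "centered_gaussian_process M I X K" and Y: "centered_gaussian_process N I Y K'"
    and same_cov: "\<And>s r. s \<in> I \<Longrightarrow> r \<in> I \<Longrightarrow> K s r = K' s r"
  shows "distr M (PiM I (\<lambda>_. borel)) (\<lambda>\<omega>. \<lambda>s\<in>I. X s \<omega>) = distr N (PiM I (\<lambda>_. borel)) (\<lambda>\<omega>. \<lambda>s\<in>I. Y s \<omega>)"
proof (rule distr_PiM_eq_if_finite_dim_distr_eq)
  fix J assume J: "finite J" "J \<subseteq> I"
  show "distr M (PiM J (\<lambda>_. borel)) (\<lambda>\<omega>. \<lambda>s\<in>J. X s \<omega>) = distr N (PiM J (\<lambda>_. borel)) (\<lambda>\<omega>. \<lambda>s\<in>J. Y s \<omega>)"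
  proof (rule distr_PiM_eq_if_linear_combinations_eq)
    fix t :: "'i \<Rightarrow> real"
    have "(\<Sum>s\<in>J. \<Sum>r\<in>J. t s * t r * K s r) = (\<Sum>s\<in>J. \<Sum>r\<in>J. t s * t r * K' s r)"
      using J(2) by (intro sum.cong refl) (simp add: same_cov subsetD)
    then show "distr M borel (\<lambda>\<omega>. \<Sum>s\<in>J. t s * X s \<omega>) = distr N borel (\<lambda>\<omega>. \<Sum>s\<in>J. t s * Y s \<omega>)"
      using centered_gaussian_process_linear_combination[OF X J, of t]
        centered_gaussian_process_linear_combination[OF Y J, of t]
      by (intro centered_normal_rv_distr_eq centered_gaussian_process_prob_space[OF X]
          centered_gaussian_process_prob_space[OF Y]) simp_all
  qed (use J in \<open>auto intro: centered_gaussian_process_prob_space centered_gaussian_process_measurable X Y\<close>)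
qed (auto intro: centered_gaussian_process_prob_space centered_gaussian_process_measurable X Y)

lemma centered_gaussian_process_reindex:
  fixes X :: "'t \<Rightarrow> 'a \<Rightarrow> real" and h :: "'i \<Rightarrow> 't"
  assumes X: "centered_gaussian_process M T X K" and "inj_on h I" "h ` I \<subseteq> T"
  shows "centered_gaussian_process M I (\<lambda>s. X (h s)) (\<lambda>s r. K (h s) (h r))"
  unfolding centered_gaussian_process_def
proof (intro conjI allI impI ballI)
  fix S and w :: "'i \<Rightarrow> real" assume S: "finite S" "S \<subseteq> I"
  define w' :: "'t \<Rightarrow> real" where "w' = w \<circ> the_inv_into I h"
  have inj: "inj_on h S"
    using assms(2) S(2) by (rule inj_on_subset)
  have w'_h: "w' (h s) = w s" if "s \<in> S" for s
    using that S(2) assms(2) by (auto simp: w'_def the_inv_into_f_f)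
  have "centered_normal_rv M (\<lambda>\<omega>. \<Sum>u\<in>h ` S. w' u * X u \<omega>) (\<Sum>u\<in>h ` S. \<Sum>v\<in>h ` S. w' u * w' v * K u v)"
    using S assms(3) by (intro centered_gaussian_process_linear_combination[OF X]) auto
  then show "centered_normal_rv M (\<lambda>\<omega>. \<Sum>s\<in>S. w s * X (h s) \<omega>) (\<Sum>s\<in>S. \<Sum>r\<in>S. w s * w r * K (h s) (h r))"
    by (simp add: sum.reindex[OF inj] w'_h)
qed (use assms(3) in \<open>auto intro: centered_gaussian_process_prob_space centered_gaussian_process_measurable X\<close>)

lemma centered_gaussian_process_scale:
  fixes X :: "'t \<Rightarrow> 'a \<Rightarrow> real"
  assumes X: "centered_gaussian_process M T X K"
  shows "centered_gaussian_process M T (\<lambda>s \<omega>. c * X s \<omega>) (\<lambda>s r. c\<^sup>2 * K s r)"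
  unfolding centered_gaussian_process_def
proof (intro conjI allI impI ballI)
  fix S and w :: "'t \<Rightarrow> real" assume S: "finite S" "S \<subseteq> T"
  have "centered_normal_rv M (\<lambda>\<omega>. \<Sum>s\<in>S. (c * w s) * X s \<omega>) (\<Sum>s\<in>S. \<Sum>r\<in>S. (c * w s) * (c * w r) * K s r)"
    by (rule centered_gaussian_process_linear_combination[OF X S])
  moreover have "(\<lambda>\<omega>. \<Sum>s\<in>S. (c * w s) * X s \<omega>) = (\<lambda>\<omega>. \<Sum>s\<in>S. w s * (c * X s \<omega>))"
    by (simp add: mult.left_commute mult.assoc)
  moreover have "(\<Sum>s\<in>S. \<Sum>r\<in>S. (c * w s) * (c * w r) * K s r) = (\<Sum>s\<in>S. \<Sum>r\<in>S. w s * w r * (c\<^sup>2 * K s r))"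
    by (simp add: power2_eq_square mult.left_commute mult.assoc)
  ultimately show "centered_normal_rv M (\<lambda>\<omega>. \<Sum>s\<in>S. w s * (c * X s \<omega>)) (\<Sum>s\<in>S. \<Sum>r\<in>S. w s * w r * (c\<^sup>2 * K s r))"
    by simp
qed (use centered_gaussian_process_prob_space[OF X] centered_gaussian_process_measurable[OF X] in simp_all)

lemma f_fun_scale:
  assumes "0 < b"
  shows "f_fun \<alpha> c a (b * s) = b * f_fun \<alpha> (c / b powr \<alpha>) a s"
proof -
  have "(u / (b * s)) powr \<alpha> = (u / s) powr \<alpha> / b powr \<alpha>" if "u > 0" for u
    using assms that by (simp add: powr_divide[symmetric] mult.commute)
  then have "(LBINT u:{0<..}. (sin (u / 2))\<^sup>2 / u\<^sup>2 * (1 - exp (- 2 * c * (u / (b * s)) powr \<alpha>))) =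
      (LBINT u:{0<..}. (sin (u / 2))\<^sup>2 / u\<^sup>2 * (1 - exp (- 2 * (c / b powr \<alpha>) * (u / s) powr \<alpha>)))"
    by (intro set_lebesgue_integral_cong) auto
  then show ?thesis
    using assms by (simp add: f_fun_def)
qed

lemma G_cov_scale:
  assumes "0 < b"
  shows "G_cov \<alpha> c a (b * s) (b * r) = b * G_cov \<alpha> (c / b powr \<alpha>) a s r"
proof -
  have "\<bar>b * s - b * r\<bar> = b * \<bar>s - r\<bar>"
    using assms by (simp add: right_diff_distrib[symmetric] abs_mult)
  then show ?thesis
    using f_fun_scale[OF assms] by (simp add: G_cov_def distrib_left right_diff_distrib)
qed

theorem proposition3p14:
  fixes \<alpha> c a b :: real
    and M :: "'a measure" and N :: "'b measure"
    and X :: "real \<Rightarrow> 'a \<Rightarrow> real" and Y :: "real \<Rightarrow> 'b \<Rightarrow> real"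
  assumes "0 < \<alpha>" "\<alpha> \<le> 2" "0 < c" "0 < a" "0 < b"
    and "centered_gaussian_process M {0..} X (G_cov \<alpha> c a)"
    and "centered_gaussian_process N {0..} Y (G_cov \<alpha> (c / b powr \<alpha>) a)"
  shows "distr M (PiM {0..} (\<lambda>_. borel)) (\<lambda>\<omega>. \<lambda>s\<in>{0..}. X (b * s) \<omega>) =
         distr N (PiM {0..} (\<lambda>_. borel)) (\<lambda>\<omega>. \<lambda>s\<in>{0..}. sqrt b * Y s \<omega>)"
proof (rule centered_gaussian_process_distr_eq)
  show "centered_gaussian_process M {0..} (\<lambda>s. X (b * s)) (\<lambda>s r. G_cov \<alpha> c a (b * s) (b * r))"
    using assms(5) by (intro centered_gaussian_process_reindex[OF assms(6)]) (auto simp: inj_on_def)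
  show "centered_gaussian_process N {0..} (\<lambda>s \<omega>. sqrt b * Y s \<omega>) (\<lambda>s r. (sqrt b)\<^sup>2 * G_cov \<alpha> (c / b powr \<alpha>) a s r)"
    using assms(7) by (rule centered_gaussian_process_scale)
  show "G_cov \<alpha> c a (b * s) (b * r) = (sqrt b)\<^sup>2 * G_cov \<alpha> (c / b powr \<alpha>) a s r" for s r
    using G_cov_scale[OF assms(5)] assms(5) by simp
qed

end
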